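(* Let $h\geq 3$. For each $(r,s)\in\{(0,2),(4,0)\}$ there exists a $(K_2,S(C_h))$-URGDD$(r,s)$ of $C_{h(2)}$.
   Context: For integers $m,n$, $C_{m(n)}$ is the graph with vertex set $X^1\cup\cdots\cup X^m$, where the $X^i$ are pairwise disjoint sets of size $n$, and edge set $\{\{u,w\}: u\in X^i, w\in X^j, |i-j|\equiv 1\pmod m\}$. For $h\geq3$, an $h$-sun is the graph on $2h$ distinct vertices $a_1,\ldots,a_h,b_1,\ldots,b_h$ consisting of the $h$-cycle $(a_1,\ldots,a_h)$ together with the edges $\{a_i,b_i\}$, $i=1,\ldots,h$. A $(K_2,S(C_h))$-URGDD$(r,s)$ of $C_{m(n)}$ is a partition of the edge set of $C_{m(n)}$ into $r$ classes each of which is a perfect matching of $C_{m(n)}$ and $s$ classes each of which is a set of vertex-disjoint $h$-suns (subgraphs of $C_{m(n)}$) covering every vertex exactly once. *)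

theory Defs
  imports Main
begin

text \<open>The graph C_{m(n)}: vertex (i,x) means the x-th element of the part X^(i+1),
  with parts indexed 0..m-1 and elements 0..n-1.  Edges join vertices in parts
  i, j with i - j = +1 or -1 modulo m (cyclic adjacency of parts).\<close>

definition cmn_vertices :: "nat \<Rightarrow> nat \<Rightarrow> (nat \<times> nat) set" where
  "cmn_vertices m n = {0..<m} \<times> {0..<n}"

definition cmn_edges :: "nat \<Rightarrow> nat \<Rightarrow> (nat \<times> nat) set set" where
  "cmn_edges m n = {{u, w} | u w. u \<in> cmn_vertices m n \<and> w \<in> cmn_vertices m n \<and>
      ((int (fst u) - int (fst w)) mod int m = 1 \<or>
       (int (fst u) - int (fst w)) mod int m = int m - 1)}"

definition perfect_matching :: "'v set \<Rightarrow> 'v set set \<Rightarrow> 'v set set \<Rightarrow> bool" where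
  "perfect_matching V E M \<longleftrightarrow> M \<subseteq> E \<and>
     (\<forall>e\<in>M. \<forall>e'\<in>M. e \<noteq> e' \<longrightarrow> e \<inter> e' = {}) \<and> \<Union>M = V"

definition is_sun :: "nat \<Rightarrow> 'v set set \<Rightarrow> bool" where
  "is_sun h T \<longleftrightarrow> (\<exists>as bs. length as = h \<and> length bs = h \<and> distinct (as @ bs) \<and>
     T = {{as ! i, as ! ((i + 1) mod h)} | i. i < h} \<union> {{as ! i, bs ! i} | i. i < h})"

definition sun_class :: "nat \<Rightarrow> 'v set \<Rightarrow> 'v set set \<Rightarrow> 'v set set \<Rightarrow> bool" where
  "sun_class h V E C \<longleftrightarrow> (\<exists>\<S>. (\<forall>T\<in>\<S>. is_sun h T \<and> T \<subseteq> E) \<and>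
     (\<forall>T\<in>\<S>. \<forall>T'\<in>\<S>. T \<noteq> T' \<longrightarrow> \<Union>T \<inter> \<Union>T' = {}) \<and>
     \<Union>(\<Union>\<S>) = V \<and> C = \<Union>\<S>)"

definition urgdd :: "nat \<Rightarrow> nat \<Rightarrow> nat \<Rightarrow> 'v set \<Rightarrow> 'v set set \<Rightarrow> bool" where
  "urgdd h r s V E \<longleftrightarrow> (\<exists>Ms Ss. length Ms = r \<and> length Ss = s \<and>
     (\<forall>M\<in>set Ms. perfect_matching V E M) \<and> (\<forall>S\<in>set Ss. sun_class h V E S) \<and>
     (\<forall>i < r + s. \<forall>j < r + s. i \<noteq> j \<longrightarrow> (Ms @ Ss) ! i \<inter> (Ms @ Ss) ! j = {}) \<and>
     \<Union>(set (Ms @ Ss)) = E)"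

end

theory Submission
  imports Defs
begin

text \<open>Call x \<in> {0, 1} the level of the vertex (i, x) in part i. Every edge of C_h(2) joins some
  (i, x) to (i + 1 mod h, y), and for h \<ge> 3 the triple (i, x, y) is determined by the edge.

  Two sun classes: for a level c, the h-cycle on level c together with the pendant edges
  (i, c)(i + 1, 1 - c) is a spanning h-sun, and the suns for c = 0, 1 split the edges according to
  the level of their endpoint in the earlier part.

  Four matchings: a choice f of a level in every part gives the perfect matching of the edges
  (i, f i)(i + 1, 1 - f (i + 1)), which contains the edge (i, x)(i + 1, y) iff
  (f i, f (i + 1)) = (x, 1 - y). Hence four such f form a 1-factorisation as soon as the pairs
  (f i, f (i + 1)) run through {0, 1} \<times> {0, 1} for every i. This holds for the f_v with
  f_v i = l_(k i) v, v \<in> Z_2 \<times> Z_2, where l_0, l_1, l_2 are the three nonzero linear forms on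
  Z_2 \<times> Z_2 and k is a proper 3-colouring of the h-cycle: any two distinct nonzero forms together
  give a bijection of Z_2 \<times> Z_2.\<close>

lemma int_diff_mod_eq_1_iff:
  assumes "2 \<le> m" "a < m"
  shows "(int a - int b) mod int m = 1 \<longleftrightarrow> a = Suc b mod m"
proof -
  have "(int a - int b) mod int m = 1 \<longleftrightarrow> (int a - int b) mod int m = 1 mod int m"
    using assms(1) by simp
  also have "\<dots> \<longleftrightarrow> int a mod int m = int (Suc b) mod int m"
    by (simp add: mod_eq_dvd_iff algebra_simps)
  also have "\<dots> \<longleftrightarrow> a = Suc b mod m"
    using assms(2) by (metis mod_less of_nat_eq_iff of_nat_mod)
  finally show ?thesis .
qed

lemma int_diff_mod_eq_minus_1_iff:
  assumes "2 \<le> m"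
  shows "(int a - int b) mod int m = int m - 1 \<longleftrightarrow> (int b - int a) mod int m = 1"
  using assms zmod_zminus1_eq_if[of "int a - int b" "int m"] by auto

lemma inj_on_Suc_mod: "inj_on (\<lambda>i. Suc i mod m) {..<m}"
  by (auto simp: inj_on_def mod_Suc split: if_splits)

lemma image_Suc_mod_lessThan:
  assumes "0 < m"
  shows "(\<lambda>i. Suc i mod m) ` {..<m} = {..<m}"
  using assms inj_on_Suc_mod by (intro endo_inj_surj) auto

lemma Suc_Suc_mod_neq:
  assumes "3 \<le> m" "i < m"
  shows "Suc (Suc i) mod m \<noteq> i"
  using assms by (auto simp: mod_Suc)

definition cyc_edge :: "nat \<Rightarrow> nat \<Rightarrow> nat \<Rightarrow> nat \<Rightarrow> (nat \<times> nat) set" where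
  "cyc_edge m i x y = {(i, x), (Suc i mod m, y)}"

lemma cmn_edges_eq_cyc_edges:
  assumes "2 \<le> m"
  shows "cmn_edges m n = {cyc_edge m i x y | i x y. i < m \<and> x < n \<and> y < n}"
proof (intro equalityI subsetI)
  fix e assume "e \<in> cmn_edges m n"
  then obtain a x b y where e: "e = {(a, x), (b, y)}" "a < m" "b < m" "x < n" "y < n"
    and "(int a - int b) mod int m = 1 \<or> (int a - int b) mod int m = int m - 1"
    unfolding cmn_edges_def cmn_vertices_def by auto
  then have "a = Suc b mod m \<or> b = Suc a mod m"
    using assms int_diff_mod_eq_1_iff int_diff_mod_eq_minus_1_iff by metis
  then have "e = cyc_edge m b y x \<or> e = cyc_edge m a x y"
    using e(1) by (auto simp: cyc_edge_def)
  then show "e \<in> {cyc_edge m i x y | i x y. i < m \<and> x < n \<and> y < n}"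
    using e by blast
next
  fix e assume "e \<in> {cyc_edge m i x y | i x y. i < m \<and> x < n \<and> y < n}"
  then obtain i x y where e: "e = cyc_edge m i x y" "i < m" "x < n" "y < n"
    by blast
  have "(int (Suc i mod m) - int i) mod int m = 1"
    using assms int_diff_mod_eq_1_iff by simp
  then show "e \<in> cmn_edges m n"
    unfolding cmn_edges_def cmn_vertices_def using assms e
    by (auto simp: cyc_edge_def insert_commute)
qed

lemma cyc_edge_eq_iff:
  assumes "3 \<le> m" "i < m" "j < m"
  shows "cyc_edge m i x y = cyc_edge m j x' y' \<longleftrightarrow> i = j \<and> x = x' \<and> y = y'"
proof
  assume "cyc_edge m i x y = cyc_edge m j x' y'"
  moreover have "\<not> (i = Suc j mod m \<and> j = Suc i mod m)"
    using Suc_Suc_mod_neq[OF assms(1,2)] by (metis mod_Suc_eq)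
  ultimately show "i = j \<and> x = x' \<and> y = y'"
    by (auto simp: cyc_edge_def doubleton_eq_iff)
qed simp

definition level_sun :: "nat \<Rightarrow> nat \<Rightarrow> (nat \<times> nat) set set" where
  "level_sun h c = {cyc_edge h i c c | i. i < h} \<union> {cyc_edge h i c (1 - c) | i. i < h}"

lemma is_sun_level_sun:
  assumes "0 < h" "c < 2"
  shows "is_sun h (level_sun h c)"
  unfolding is_sun_def
proof (intro exI conjI)
  let ?as = "map (\<lambda>i. (i, c)) [0..<h]"
  let ?bs = "map (\<lambda>i. (Suc i mod h, 1 - c)) [0..<h]"
  show "length ?as = h" "length ?bs = h"
    by simp_all
  have "c \<noteq> 1 - c"
    using assms(2) by arith
  then have "set ?as \<inter> set ?bs = {}"
    by auto
  moreover have "inj_on (\<lambda>i. (i, c)) (set [0..<h])"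
    by (simp add: inj_on_def)
  moreover have "inj_on (\<lambda>i. (Suc i mod h, 1 - c)) (set [0..<h])"
    using inj_on_Suc_mod[of h] by (intro inj_on_imageI2[of fst]) (simp add: comp_def atLeast0LessThan)
  ultimately show "distinct (?as @ ?bs)"
    by (simp add: distinct_map)
  have "{?as ! i, ?as ! ((i + 1) mod h)} = cyc_edge h i c c"
    "{?as ! i, ?bs ! i} = cyc_edge h i c (1 - c)" if "i < h" for i
    using that assms(1) by (simp_all add: cyc_edge_def)
  then show "level_sun h c = {{?as ! i, ?as ! ((i + 1) mod h)} | i. i < h}
      \<union> {{?as ! i, ?bs ! i} | i. i < h}"
    unfolding level_sun_def by blast
qed

lemma level_sun_subset:
  assumes "2 \<le> h" "c < 2"
  shows "level_sun h c \<subseteq> cmn_edges h 2"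
  unfolding level_sun_def cmn_edges_eq_cyc_edges[OF assms(1)] using assms(2) by force

lemma Union_level_sun:
  assumes "2 \<le> h" "c < 2"
  shows "\<Union> (level_sun h c) = cmn_vertices h 2"
proof (intro equalityI subsetI)
  fix v assume "v \<in> \<Union> (level_sun h c)"
  then show "v \<in> cmn_vertices h 2"
    using level_sun_subset[OF assms] unfolding cmn_edges_def cmn_vertices_def by blast
next
  fix v assume "v \<in> cmn_vertices h 2"
  then obtain i x where v: "v = (i, x)" "i < h" "x < 2"
    by (auto simp: cmn_vertices_def)
  have "i \<in> (\<lambda>j. Suc j mod h) ` {..<h}"
    using image_Suc_mod_lessThan[of h] assms(1) v(2) by simp
  then obtain j where j: "j < h" "Suc j mod h = i"
    by blast
  have "x = c \<or> x = 1 - c"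
    using assms(2) v(3) by arith
  then have "v \<in> cyc_edge h i c (1 - c) \<union> cyc_edge h j c (1 - c)"
    using v j by (auto simp: cyc_edge_def)
  moreover have "cyc_edge h i c (1 - c) \<in> level_sun h c" "cyc_edge h j c (1 - c) \<in> level_sun h c"
    using v(2) j(1) unfolding level_sun_def by blast+
  ultimately show "v \<in> \<Union> (level_sun h c)"
    by blast
qed

lemma sun_class_level_sun:
  assumes "2 \<le> h" "c < 2"
  shows "sun_class h (cmn_vertices h 2) (cmn_edges h 2) (level_sun h c)"
  unfolding sun_class_def
  using assms is_sun_level_sun level_sun_subset Union_level_sun
  by (intro exI[of _ "{level_sun h c}"]) auto

lemma level_suns_disjoint:
  assumes "3 \<le> h"
  shows "level_sun h 0 \<inter> level_sun h 1 = {}"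
proof -
  have "cyc_edge h i 0 y \<noteq> cyc_edge h j 1 y'" if "i < h" "j < h" for i j y y'
    using cyc_edge_eq_iff[OF assms that] by simp
  then show ?thesis
    unfolding level_sun_def by blast
qed

lemma level_suns_Un:
  assumes "2 \<le> h"
  shows "level_sun h 0 \<union> level_sun h 1 = cmn_edges h 2"
proof (intro equalityI subsetI)
  fix e assume "e \<in> level_sun h 0 \<union> level_sun h 1"
  then show "e \<in> cmn_edges h 2"
    using level_sun_subset[OF assms, of 0] level_sun_subset[OF assms, of 1] by auto
next
  fix e assume "e \<in> cmn_edges h 2"
  then obtain i x y where e: "e = cyc_edge h i x y" "i < h" "x < 2" "y < 2"
    unfolding cmn_edges_eq_cyc_edges[OF assms] by blast
  then consider "x = 0" "y = 0" | "x = 0" "y = 1" | "x = 1" "y = 0" | "x = 1" "y = 1"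
    by linarith
  then show "e \<in> level_sun h 0 \<union> level_sun h 1"
    by cases (use e(1,2) in \<open>auto simp: level_sun_def\<close>)
qed

definition level_matching :: "nat \<Rightarrow> (nat \<Rightarrow> nat) \<Rightarrow> (nat \<times> nat) set set" where
  "level_matching h f = {cyc_edge h i (f i) (1 - f (Suc i mod h)) | i. i < h}"

lemma cyc_edge_in_level_matching_iff:
  assumes "3 \<le> h" "i < h"
  shows "cyc_edge h i x y \<in> level_matching h f \<longleftrightarrow> x = f i \<and> y = 1 - f (Suc i mod h)"
proof
  assume "cyc_edge h i x y \<in> level_matching h f"
  then obtain j where "j < h" "cyc_edge h i x y = cyc_edge h j (f j) (1 - f (Suc j mod h))"
    unfolding level_matching_def by blast
  then show "x = f i \<and> y = 1 - f (Suc i mod h)"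
    using cyc_edge_eq_iff[OF assms] by blast
next
  assume "x = f i \<and> y = 1 - f (Suc i mod h)"
  then show "cyc_edge h i x y \<in> level_matching h f"
    using assms(2) unfolding level_matching_def by blast
qed

lemma level_matching_subset:
  assumes "2 \<le> h" "\<And>i. i < h \<Longrightarrow> f i < 2"
  shows "level_matching h f \<subseteq> cmn_edges h 2"
  unfolding level_matching_def cmn_edges_eq_cyc_edges[OF assms(1)] using assms by fastforce

lemma level_matching_edges_disjoint:
  assumes "\<And>i. i < h \<Longrightarrow> f i < 2"
    and "e \<in> level_matching h f" "e' \<in> level_matching h f" "e \<noteq> e'"
  shows "e \<inter> e' = {}"
proof -
  obtain i j where ij: "i < h" "j < h" "i \<noteq> j"
    and e: "e = cyc_edge h i (f i) (1 - f (Suc i mod h))"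
    and e': "e' = cyc_edge h j (f j) (1 - f (Suc j mod h))"
    using assms(2-4) unfolding level_matching_def by blast
  have neq: "f k \<noteq> 1 - f k" if "k < h" for k
    using assms(1)[OF that] by arith
  have "Suc i mod h \<noteq> Suc j mod h"
    using inj_on_eq_iff[OF inj_on_Suc_mod[of h]] ij by blast
  moreover have "(i, f i) \<noteq> (Suc j mod h, 1 - f (Suc j mod h))"
    "(Suc i mod h, 1 - f (Suc i mod h)) \<noteq> (j, f j)"
    using neq ij(1,2) by (metis Pair_inject)+
  ultimately show ?thesis
    using ij(3) unfolding e e' cyc_edge_def by auto
qed

lemma Union_level_matching:
  assumes "2 \<le> h" "\<And>i. i < h \<Longrightarrow> f i < 2"
  shows "\<Union> (level_matching h f) = cmn_vertices h 2"
proof (intro equalityI subsetI)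
  fix v assume "v \<in> \<Union> (level_matching h f)"
  then show "v \<in> cmn_vertices h 2"
    using assms level_matching_subset unfolding cmn_edges_def cmn_vertices_def by blast
next
  fix v assume "v \<in> cmn_vertices h 2"
  then obtain i x where v: "v = (i, x)" "i < h" "x < 2"
    by (auto simp: cmn_vertices_def)
  have "i \<in> (\<lambda>j. Suc j mod h) ` {..<h}"
    using image_Suc_mod_lessThan[of h] assms(1) v(2) by simp
  then obtain j where j: "j < h" "Suc j mod h = i"
    by blast
  have "x = f i \<or> x = 1 - f i"
    using assms(2)[OF v(2)] v(3) by linarith
  then have "v \<in> cyc_edge h i (f i) (1 - f (Suc i mod h)) \<union> cyc_edge h j (f j) (1 - f i)"
    using v j by (auto simp: cyc_edge_def)
  moreover have "cyc_edge h i (f i) (1 - f (Suc i mod h)) \<in> level_matching h f"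
    "cyc_edge h j (f j) (1 - f i) \<in> level_matching h f"
    using v(2) j unfolding level_matching_def by blast+
  ultimately show "v \<in> \<Union> (level_matching h f)"
    by blast
qed

lemma perfect_matching_level_matching:
  assumes "2 \<le> h" "\<And>i. i < h \<Longrightarrow> f i < 2"
  shows "perfect_matching (cmn_vertices h 2) (cmn_edges h 2) (level_matching h f)"
  unfolding perfect_matching_def
  using level_matching_subset[of h f, OF assms] level_matching_edges_disjoint[of h f, OF assms(2)]
    Union_level_matching[of h f, OF assms] by blast

definition cycle_colour :: "nat \<Rightarrow> nat" where
  "cycle_colour i = (if i = 0 then 2 else if odd i then 1 else 0)"

lemma cycle_colour_less: "cycle_colour i < 3"
  by (simp add: cycle_colour_def)

lemma cycle_colour_Suc_mod:
  assumes "2 \<le> h" "i < h"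
  shows "cycle_colour i \<noteq> cycle_colour (Suc i mod h)"
  using assms by (auto simp: cycle_colour_def mod_Suc)

text \<open>Pairs in {0, 1} \<times> {0, 1} stand for vectors of Z_2 \<times> Z_2, and lin_form 0, 1, 2 are the
  three nonzero linear forms on it.\<close>

definition lin_form :: "nat \<Rightarrow> nat \<times> nat \<Rightarrow> nat" where
  "lin_form c v = (if c = 0 then fst v else if c = 1 then snd v else (fst v + snd v) mod 2)"

lemma lin_form_less: "v \<in> {..<2} \<times> {..<2} \<Longrightarrow> lin_form c v < 2"
  by (auto simp: lin_form_def)

lemma bij_betw_lin_form_pair:
  assumes "c < 3" "c' < 3" "c \<noteq> c'"
  shows "bij_betw (\<lambda>v. (lin_form c v, lin_form c' v)) ({..<2} \<times> {..<2}) ({..<2} \<times> {..<2})"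
proof -
  have square: "{..<2::nat} \<times> {..<2::nat} = {(0, 0), (0, 1), (1, 0), (1, 1)}"
    by (auto simp: less_2_cases_iff)
  have "c = 0 \<or> c = 1 \<or> c = 2" "c' = 0 \<or> c' = 1 \<or> c' = 2"
    using assms(1,2) by auto
  then have "inj_on (\<lambda>v. (lin_form c v, lin_form c' v)) ({..<2} \<times> {..<2})"
    using assms(3) unfolding square by (elim disjE) (simp_all add: lin_form_def)
  moreover have "(\<lambda>v. (lin_form c v, lin_form c' v)) ` ({..<2} \<times> {..<2}) \<subseteq> {..<2} \<times> {..<2}"
    using lin_form_less by blast
  ultimately show ?thesis
    by (simp add: bij_betw_def endo_inj_surj)
qed

definition coloured_matching :: "nat \<Rightarrow> nat \<times> nat \<Rightarrow> (nat \<times> nat) set set" where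
  "coloured_matching h v = level_matching h (\<lambda>i. lin_form (cycle_colour i) v)"

lemma perfect_matching_coloured_matching:
  assumes "2 \<le> h" "v \<in> {..<2} \<times> {..<2}"
  shows "perfect_matching (cmn_vertices h 2) (cmn_edges h 2) (coloured_matching h v)"
  unfolding coloured_matching_def
  using assms by (intro perfect_matching_level_matching) (auto intro: lin_form_less)

lemma cyc_edge_in_coloured_matching_iff:
  assumes "3 \<le> h" "i < h" "y < 2" "v \<in> {..<2} \<times> {..<2}"
  shows "cyc_edge h i x y \<in> coloured_matching h v \<longleftrightarrow>
    (lin_form (cycle_colour i) v, lin_form (cycle_colour (Suc i mod h)) v) = (x, 1 - y)"
proof -
  have "y = 1 - lin_form c' v \<longleftrightarrow> lin_form c' v = 1 - y" for c'
    using lin_form_less[OF assms(4), of c'] assms(3) by arith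
  then show ?thesis
    unfolding coloured_matching_def cyc_edge_in_level_matching_iff[OF assms(1,2)] by auto
qed

lemma bij_betw_colour_pair:
  assumes "2 \<le> h" "i < h"
  shows "bij_betw (\<lambda>v. (lin_form (cycle_colour i) v, lin_form (cycle_colour (Suc i mod h)) v))
    ({..<2} \<times> {..<2}) ({..<2} \<times> {..<2})"
  by (intro bij_betw_lin_form_pair cycle_colour_less cycle_colour_Suc_mod[OF assms])

lemma coloured_matchings_disjoint:
  assumes "3 \<le> h" "v \<in> {..<2} \<times> {..<2}" "w \<in> {..<2} \<times> {..<2}" "v \<noteq> w"
  shows "coloured_matching h v \<inter> coloured_matching h w = {}"
proof (rule ccontr)
  have h2: "2 \<le> h"
    using assms(1) by simp
  assume "coloured_matching h v \<inter> coloured_matching h w \<noteq> {}"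
  then obtain e where "e \<in> coloured_matching h v" "e \<in> coloured_matching h w"
    by blast
  moreover have "coloured_matching h v \<subseteq> cmn_edges h 2"
    using perfect_matching_coloured_matching[OF h2 assms(2)] by (simp add: perfect_matching_def)
  ultimately obtain i x y where "i < h" "y < 2"
    "cyc_edge h i x y \<in> coloured_matching h v" "cyc_edge h i x y \<in> coloured_matching h w"
    using cmn_edges_eq_cyc_edges[OF h2] by auto
  then have "(lin_form (cycle_colour i) v, lin_form (cycle_colour (Suc i mod h)) v) =
      (lin_form (cycle_colour i) w, lin_form (cycle_colour (Suc i mod h)) w)"
    using cyc_edge_in_coloured_matching_iff assms(1-3) by simp
  then show False
    using bij_betw_imp_inj_on[OF bij_betw_colour_pair[OF h2 \<open>i < h\<close>]] assms(2-4)
    by (auto dest: inj_onD)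
qed

lemma Union_coloured_matchings:
  assumes "3 \<le> h"
  shows "\<Union> (coloured_matching h ` ({..<2} \<times> {..<2})) = cmn_edges h 2"
proof (intro equalityI subsetI)
  fix e assume "e \<in> \<Union> (coloured_matching h ` ({..<2} \<times> {..<2}))"
  then obtain v where "v \<in> {..<2} \<times> {..<2}" "e \<in> coloured_matching h v"
    by blast
  then show "e \<in> cmn_edges h 2"
    using assms perfect_matching_coloured_matching[of h v] by (auto simp: perfect_matching_def)
next
  fix e assume "e \<in> cmn_edges h 2"
  moreover have h2: "2 \<le> h"
    using assms by simp
  ultimately obtain i x y where e: "e = cyc_edge h i x y" "i < h" "x < 2" "y < 2"
    unfolding cmn_edges_eq_cyc_edges[OF h2] by blast
  have "(x, 1 - y) \<in> {..<2} \<times> {..<2}"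
    using e(3) by simp
  also have "\<dots> = (\<lambda>v. (lin_form (cycle_colour i) v, lin_form (cycle_colour (Suc i mod h)) v))
      ` ({..<2} \<times> {..<2})"
    using bij_betw_imp_surj_on[OF bij_betw_colour_pair[OF h2 e(2)]] by simp
  finally obtain v where v: "(x, 1 - y) = (lin_form (cycle_colour i) v, lin_form (cycle_colour (Suc i mod h)) v)"
    "v \<in> {..<2} \<times> {..<2}"
    by (rule imageE)
  then have "e \<in> coloured_matching h v"
    unfolding e(1) cyc_edge_in_coloured_matching_iff[OF assms e(2) e(4) v(2)] by simp
  then show "e \<in> \<Union> (coloured_matching h ` ({..<2} \<times> {..<2}))"
    using v(2) by blast
qed

lemma nth_map_disjoint:
  assumes "distinct xs" "\<And>x y. x \<in> set xs \<Longrightarrow> y \<in> set xs \<Longrightarrow> x \<noteq> y \<Longrightarrow> f x \<inter> f y = {}"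
    and "i < length xs" "j < length xs" "i \<noteq> j"
  shows "map f xs ! i \<inter> map f xs ! j = {}"
  using assms by (simp add: nth_eq_iff_index_eq)

lemma urgdd_two_sun_classes:
  assumes "3 \<le> h"
  shows "urgdd h 0 2 (cmn_vertices h 2) (cmn_edges h 2)"
proof -
  let ?Ss = "map (level_sun h) [0, 1]"
  have "\<forall>S\<in>set ?Ss. sun_class h (cmn_vertices h 2) (cmn_edges h 2) S"
    using assms sun_class_level_sun by auto
  moreover have "\<forall>i<2. \<forall>j<2. i \<noteq> j \<longrightarrow> ?Ss ! i \<inter> ?Ss ! j = {}"
    using level_suns_disjoint[OF assms] by (intro allI impI nth_map_disjoint) auto
  moreover have "\<Union> (set ?Ss) = cmn_edges h 2"
    using level_suns_Un assms by simp
  ultimately show ?thesis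
    unfolding urgdd_def by (intro exI[of _ "[]"] exI[of _ ?Ss]) simp
qed

lemma urgdd_four_matchings:
  assumes "3 \<le> h"
  shows "urgdd h 4 0 (cmn_vertices h 2) (cmn_edges h 2)"
proof -
  let ?vs = "[(0, 0), (0, 1), (1, 0), (1, 1)] :: (nat \<times> nat) list"
  let ?Ms = "map (coloured_matching h) ?vs"
  have vs: "set ?vs = {..<2} \<times> {..<2}" "distinct ?vs"
    by (auto simp: less_2_cases_iff)
  have "\<forall>M\<in>set ?Ms. perfect_matching (cmn_vertices h 2) (cmn_edges h 2) M"
    using assms perfect_matching_coloured_matching vs(1) by auto
  moreover have "\<forall>i<4. \<forall>j<4. i \<noteq> j \<longrightarrow> ?Ms ! i \<inter> ?Ms ! j = {}"
    using coloured_matchings_disjoint[OF assms] vs by (intro allI impI nth_map_disjoint) auto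
  moreover have "\<Union> (set ?Ms) = cmn_edges h 2"
    unfolding set_map vs(1) by (rule Union_coloured_matchings[OF assms])
  ultimately show ?thesis
    unfolding urgdd_def by (intro exI[of _ ?Ms] exI[of _ "[]"]) simp
qed

theorem lemma3p3:
  fixes h r s :: nat
  assumes "h \<ge> 3" and "(r, s) \<in> {(0, 2), (4, 0)}"
  shows "urgdd h r s (cmn_vertices h 2) (cmn_edges h 2)"
  using assms urgdd_two_sun_classes urgdd_four_matchings by auto

end
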